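(* Let $f\in C^1[0,1]$ with $f(0)=0$, $h:=f'$, and $q$ satisfying (q). Then $$c^*\ge\max\Big\{\sup_{\varphi\in(0,1]}\frac{f(\varphi)}{\varphi},\ h(0)+2\sqrt{\liminf_{\varphi\to0^+}\frac{q(\varphi)}{\varphi}}\Big\}.$$
   Context: Condition (q): $q\in C[0,1]$, $q>0$ on $(0,1)$, $q(0)=q(1)=0$, and $\limsup_{\varphi\to0^+}q(\varphi)/\varphi<+\infty$. $c^*$ denotes the real number such that there exists $z\in C[0,1]\cap C^1(0,1)$ with $\dot z=h-c-q/z$ and $z<0$ on $(0,1)$, and $z(0)=z(1)=0$, if and only if $c\ge c^*$ (such $z$ then being unique). *)

theory Defs
  imports "HOL-Analysis.Analysis"
begin

definition cond_q :: "(real \<Rightarrow> real) \<Rightarrow> bool" where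
  "cond_q q \<longleftrightarrow> continuous_on {0..1} q \<and> (\<forall>\<phi>\<in>{0<..<1}. q \<phi> > 0) \<and>
     q 0 = 0 \<and> q 1 = 0 \<and>
     Limsup (at_right 0) (\<lambda>\<phi>. ereal (q \<phi> / \<phi>)) < \<infinity>"

text \<open>The boundary value problem: there is z in C[0,1] and C^1(0,1) with
  z' = h - c - q/z, z < 0 on (0,1), z(0) = z(1) = 0.  (Since the right-hand side is
  continuous on (0,1), differentiability with this derivative gives C^1(0,1).)\<close>
definition has_front_solution :: "(real \<Rightarrow> real) \<Rightarrow> (real \<Rightarrow> real) \<Rightarrow> real \<Rightarrow> bool" where
  "has_front_solution h q c \<longleftrightarrow> (\<exists>z :: real \<Rightarrow> real.
     continuous_on {0..1} z \<and>
     (\<forall>\<phi>\<in>{0<..<1}. (z has_real_derivative (h \<phi> - c - q \<phi> / z \<phi>)) (at \<phi>)) \<and>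
     continuous_on {0<..<1} (deriv z) \<and>
     (\<forall>\<phi>\<in>{0<..<1}. z \<phi> < 0) \<and> z 0 = 0 \<and> z 1 = 0)"

end

theory Submission
  imports Defs
begin

text \<open>Take a solution z for c = c*. First, z - f + c\<phi> has derivative -q/z \<ge> 0 and vanishes at 0,
  so f \<phi> \<le> z \<phi> + c \<phi> \<le> c \<phi>. Second, near 0 the function s = -z is positive, vanishes at 0 and
  satisfies s' \<le> a - b \<phi>/s with a close to c - h(0) and b close to the liminf of q/\<phi>. An a priori
  bound s \<le> k\<phi> integrates to s \<le> (a - b/k)\<phi>; starting from k = a and iterating, if a^2 < 4b
  the slopes drop by a fixed amount each time and eventually become negative, contradicting s > 0.
  Hence 2\<surd>b \<le> a.\<close>

lemma deriv_le_imp_le_linear: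
  fixes s :: "real \<Rightarrow> real"
  assumes "0 \<le> t" and cont: "continuous_on {0..t} s"
    and der: "\<And>x. 0 < x \<Longrightarrow> x < t \<Longrightarrow> \<exists>D. (s has_real_derivative D) (at x) \<and> D \<le> K"
  shows "s t \<le> s 0 + K * t"
proof -
  let ?g = "\<lambda>x. s x - K * x"
  have "?g t \<le> ?g 0"
  proof (rule DERIV_nonpos_imp_decreasing_open[OF \<open>0 \<le> t\<close>])
    fix x assume "0 < x" "x < t"
    then obtain D where D: "(s has_real_derivative D) (at x)" "D \<le> K" using der by blast
    have "(?g has_real_derivative D - K) (at x)"
      by (auto intro!: derivative_eq_intros D(1))
    then show "\<exists>y. DERIV ?g x :> y \<and> y \<le> 0" using D(2) by auto
  qed (intro continuous_intros cont)
  then show ?thesis by simp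
qed

lemma riccati_slope_improvement:
  fixes s :: "real \<Rightarrow> real"
  assumes "b \<ge> 0" and cont: "continuous_on {0..\<delta>} s" and s0: "s 0 = 0"
    and pos: "\<forall>x\<in>{0<..<\<delta>}. s x > 0"
    and der: "\<forall>x\<in>{0<..<\<delta>}. \<exists>D. (s has_real_derivative D) (at x) \<and> D \<le> a - b * x / s x"
    and "k > 0" and below: "\<forall>x\<in>{0<..<\<delta>}. s x \<le> k * x"
    and t: "0 < t" "t < \<delta>"
  shows "s t \<le> (a - b / k) * t"
proof -
  have "s t \<le> s 0 + (a - b / k) * t"
  proof (rule deriv_le_imp_le_linear)
    show "continuous_on {0..t} s" using t by (intro continuous_on_subset[OF cont]) auto
    fix x assume "0 < x" "x < t"
    then have x: "x \<in> {0<..<\<delta>}" using t by auto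
    then obtain D where D: "(s has_real_derivative D) (at x)" "D \<le> a - b * x / s x"
      using der by blast
    have "s x > 0" "s x \<le> k * x" using pos below x by auto
    then have "b * s x \<le> b * (k * x)" using \<open>b \<ge> 0\<close> by (intro mult_left_mono) auto
    then have "b / k \<le> b * x / s x"
      using \<open>s x > 0\<close> \<open>k > 0\<close> by (simp add: divide_simps algebra_simps)
    then show "\<exists>D. (s has_real_derivative D) (at x) \<and> D \<le> a - b / k" using D by auto
  qed (use t in simp)
  then show ?thesis using s0 by simp
qed

text \<open>When a^2 < 4b the map k \<mapsto> a - b/k lowers every slope in (0, a] by at least (b - a^2/4)/a,
  since k^2 - a k + b \<ge> b - a^2/4.\<close>
lemma riccati_slope_decrease:
  fixes a b k :: real
  assumes "0 < k" "k \<le> a" "m = b - a\<^sup>2 / 4" "m > 0"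
  shows "a - b / k \<le> k - m / a"
proof -
  have "a > 0" using assms by linarith
  have "k\<^sup>2 - a * k + b = (k - a / 2)\<^sup>2 + m" using assms(3) by (simp add: power2_eq_square algebra_simps)
  then have "k\<^sup>2 - a * k + b \<ge> m" by simp
  moreover have "m * k / a \<le> m" using assms \<open>a > 0\<close> by (simp add: divide_simps mult_left_mono)
  ultimately have "k\<^sup>2 - a * k + b - m * k / a \<ge> 0" by simp
  then show ?thesis using \<open>k > 0\<close> \<open>a > 0\<close> by (simp add: divide_simps power2_eq_square algebra_simps)
qed

lemma riccati_sqrt_bound:
  fixes s :: "real \<Rightarrow> real"
  assumes "\<delta> > 0" and "b \<ge> 0" and cont: "continuous_on {0..\<delta>} s" and s0: "s 0 = 0"
    and pos: "\<forall>x\<in>{0<..<\<delta>}. s x > 0"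
    and der: "\<forall>x\<in>{0<..<\<delta>}. \<exists>D. (s has_real_derivative D) (at x) \<and> D \<le> a - b * x / s x"
  shows "2 * sqrt b \<le> a"
proof (rule ccontr)
  assume "\<not> 2 * sqrt b \<le> a"
  define mid where "mid = \<delta> / 2"
  have mid: "mid \<in> {0<..<\<delta>}" using \<open>\<delta> > 0\<close> by (auto simp: mid_def)
  have slope_pos: "k > 0" if "\<forall>x\<in>{0<..<\<delta>}. s x \<le> k * x" for k
    using that mid pos by (smt (verit) greaterThanLessThan_iff mult_nonpos_nonneg)
  have below_a: "\<forall>x\<in>{0<..<\<delta>}. s x \<le> a * x"
  proof
    fix t assume t: "t \<in> {0<..<\<delta>}"
    have "s t \<le> s 0 + a * t"
    proof (rule deriv_le_imp_le_linear)
      show "continuous_on {0..t} s" using t by (intro continuous_on_subset[OF cont]) auto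
      fix x assume "0 < x" "x < t"
      then have x: "x \<in> {0<..<\<delta>}" using t by auto
      then obtain D where D: "(s has_real_derivative D) (at x)" "D \<le> a - b * x / s x"
        using der by blast
      have "0 \<le> b * x / s x" using pos x \<open>b \<ge> 0\<close> by (simp add: less_imp_le)
      then show "\<exists>D. (s has_real_derivative D) (at x) \<and> D \<le> a" using D by auto
    qed (use t in simp)
    then show "s t \<le> a * t" using s0 by simp
  qed
  have "a > 0" using slope_pos[OF below_a] .
  with \<open>\<not> 2 * sqrt b \<le> a\<close> have "a\<^sup>2 < (2 * sqrt b)\<^sup>2" by (intro power_strict_mono) auto
  then have "a\<^sup>2 < 4 * b" using \<open>b \<ge> 0\<close> by (simp add: power_mult_distrib)
  define m where "m = b - a\<^sup>2 / 4"
  have "m > 0" using \<open>a\<^sup>2 < 4 * b\<close> by (simp add: m_def)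
  have iterate: "\<forall>x\<in>{0<..<\<delta>}. s x \<le> (a - real n * m / a) * x" for n
  proof (induction n)
    case 0
    then show ?case using below_a by simp
  next
    case (Suc n)
    define k where "k = a - real n * m / a"
    have below_k: "\<forall>x\<in>{0<..<\<delta>}. s x \<le> k * x" using Suc k_def by simp
    have "k > 0" using slope_pos[OF below_k] .
    have "k \<le> a" using \<open>m > 0\<close> \<open>a > 0\<close> by (simp add: k_def)
    have "a - b / k \<le> a - real (Suc n) * m / a"
      using riccati_slope_decrease[OF \<open>k > 0\<close> \<open>k \<le> a\<close> m_def \<open>m > 0\<close>]
      by (simp add: k_def algebra_simps add_divide_distrib)
    then show ?case
      using riccati_slope_improvement[OF assms(2-6) \<open>k > 0\<close> below_k]
      by (meson greaterThanLessThan_iff less_imp_le mult_right_mono order_trans)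
  qed
  obtain n :: nat where "a * a / m < real n" using reals_Archimedean2 by blast
  then have "a - real n * m / a < 0" using \<open>m > 0\<close> \<open>a > 0\<close> by (simp add: divide_simps mult.commute)
  then show False using iterate[of n] mid pos by (smt (verit) mult_neg_pos greaterThanLessThan_iff)
qed

lemma has_front_solutionE:
  assumes "has_front_solution h q c"
  obtains z where "continuous_on {0..1} z"
    and "\<forall>\<phi>\<in>{0<..<1}. (z has_real_derivative (h \<phi> - c - q \<phi> / z \<phi>)) (at \<phi>)"
    and "\<forall>\<phi>\<in>{0<..<1}. z \<phi> < 0" and "z 0 = 0" and "z 1 = 0"
  using assms unfolding has_front_solution_def by (elim exE conjE) simp

lemma front_speed_ge_secant_slope:
  fixes f h q :: "real \<Rightarrow> real"
  assumes f_deriv: "\<forall>x\<in>{0..1}. (f has_real_derivative h x) (at x within {0..1})"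
    and "f 0 = 0" and q: "cond_q q" and front: "has_front_solution h q c"
    and \<phi>: "\<phi> \<in> {0<..1}"
  shows "f \<phi> / \<phi> \<le> c"
proof -
  obtain z where zc: "continuous_on {0..1} z"
    and zd: "\<forall>x\<in>{0<..<1}. (z has_real_derivative (h x - c - q x / z x)) (at x)"
    and zneg: "\<forall>x\<in>{0<..<1}. z x < 0" and "z 0 = 0" "z 1 = 0"
    using front by (rule has_front_solutionE)
  have qpos: "\<forall>x\<in>{0<..<1}. q x > 0" using q by (simp add: cond_q_def)
  have fc: "continuous_on {0..1} f"
    using DERIV_continuous_on f_deriv by blast
  let ?g = "\<lambda>x. z x - f x + c * x"
  have "?g 0 \<le> ?g \<phi>"
  proof (rule DERIV_nonneg_imp_increasing_open[of 0 \<phi> ?g])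
    show "0 \<le> \<phi>" using \<phi> by simp
    fix x assume "0 < x" "x < \<phi>"
    then have x: "x \<in> {0<..<1}" using \<phi> by auto
    have "(f has_real_derivative h x) (at x within {0<..<1})"
      using f_deriv x by (auto intro: DERIV_subset[of _ _ _ "{0..1}"])
    then have "(f has_real_derivative h x) (at x)"
      by (simp add: at_within_open[OF x])
    moreover have "(z has_real_derivative h x - c - q x / z x) (at x)" using zd x by blast
    ultimately have "(?g has_real_derivative (h x - c - q x / z x) - h x + c) (at x)"
      by (auto intro!: derivative_eq_intros)
    moreover have "(h x - c - q x / z x) - h x + c \<ge> 0"
      using qpos zneg x by (simp add: divide_pos_neg less_imp_le)
    ultimately show "\<exists>y. DERIV ?g x :> y \<and> y \<ge> 0" by blast
  next
    show "continuous_on {0..\<phi>} ?g" using \<phi>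
      by (intro continuous_intros continuous_on_subset[OF zc] continuous_on_subset[OF fc]) auto
  qed
  then have "f \<phi> \<le> z \<phi> + c * \<phi>" using \<open>z 0 = 0\<close> \<open>f 0 = 0\<close> by simp
  moreover have "z \<phi> \<le> 0"
    using zneg \<phi> \<open>z 1 = 0\<close> by (cases "\<phi> = 1") (auto intro: less_imp_le)
  ultimately show ?thesis using \<phi> by (simp add: divide_simps)
qed

lemma front_speed_ge_KPP_bound:
  fixes h q :: "real \<Rightarrow> real"
  assumes h_cont: "continuous_on {0..1} h" and front: "has_front_solution h q c"
    and "b \<ge> 0" and q_above: "\<forall>\<^sub>F \<phi> in at_right 0. b \<le> q \<phi> / \<phi>"
  shows "h 0 + 2 * sqrt b \<le> c"
proof -
  obtain z where zc: "continuous_on {0..1} z"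
    and zd: "\<forall>x\<in>{0<..<1}. (z has_real_derivative (h x - c - q x / z x)) (at x)"
    and zneg: "\<forall>x\<in>{0<..<1}. z x < 0" and "z 0 = 0"
    using front by (rule has_front_solutionE)
  obtain \<delta> where "\<delta> > 0" and \<delta>: "\<forall>x. 0 < x \<longrightarrow> x < \<delta> \<longrightarrow> b \<le> q x / x"
    using q_above unfolding eventually_at_right_field by auto
  have "2 * sqrt b \<le> c - h 0 + e" if "e > 0" for e
  proof -
    obtain d where "d > 0" and d: "\<forall>x\<in>{0..1}. dist x 0 < d \<longrightarrow> dist (h x) (h 0) < e"
      using h_cont \<open>e > 0\<close> unfolding continuous_on_iff by (meson atLeastAtMost_iff order_refl zero_le_one)
    define r where "r = min \<delta> (min d 1)"
    have r: "r > 0" "r \<le> \<delta>" "r \<le> d" "r \<le> 1" using \<open>\<delta> > 0\<close> \<open>d > 0\<close> by (auto simp: r_def)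
    show ?thesis
    proof (rule riccati_sqrt_bound[where s = "\<lambda>x. - z x" and \<delta> = r])
      show "continuous_on {0..r} (\<lambda>x. - z x)"
        using r by (intro continuous_intros continuous_on_subset[OF zc]) auto
      show "\<forall>x\<in>{0<..<r}. \<exists>D. ((\<lambda>x. - z x) has_real_derivative D) (at x) \<and>
              D \<le> c - h 0 + e - b * x / - z x"
      proof
        fix x assume x: "x \<in> {0<..<r}"
        then have "x \<in> {0<..<1}" using r by auto
        then have zx: "z x < 0" and "(z has_real_derivative h x - c - q x / z x) (at x)"
          using zneg zd by auto
        from this(2) have "((\<lambda>x. - z x) has_real_derivative - (h x - c - q x / z x)) (at x)"
          by (rule DERIV_minus)
        moreover have "h x > h 0 - e"
          using d[rule_format, of x] x r by (auto simp: dist_real_def abs_less_iff)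
        moreover have "b * x \<le> q x" using \<delta> x r by (auto simp: divide_simps)
        then have "q x / z x \<le> b * x / z x" using zx by (simp add: divide_right_mono_neg)
        ultimately show "\<exists>D. ((\<lambda>x. - z x) has_real_derivative D) (at x) \<and>
              D \<le> c - h 0 + e - b * x / - z x" by auto
      qed
    qed (use r \<open>b \<ge> 0\<close> \<open>z 0 = 0\<close> zneg in auto)
  qed
  then show ?thesis by (simp add: field_le_epsilon algebra_simps)
qed

lemma real_of_ereal_Liminf_le:
  fixes g :: "'a \<Rightarrow> ereal" and B :: real
  assumes "0 \<le> B" and bound: "\<And>b. 0 < b \<Longrightarrow> \<forall>\<^sub>F x in F. ereal b < g x \<Longrightarrow> b \<le> B"
  shows "real_of_ereal (Liminf F g) \<le> B"
proof (cases "Liminf F g")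
  case (real L)
  show ?thesis
  proof (cases "L > 0")
    case True
    have "b \<le> B" if "0 < b" "b < L" for b
    proof (rule bound[OF \<open>0 < b\<close>])
      show "\<forall>\<^sub>F x in F. ereal b < g x" using \<open>b < L\<close> real by (intro less_LiminfD) simp
    qed
    then show ?thesis using real by (auto intro: dense_le_bounded[OF True])
  qed (use real \<open>0 \<le> B\<close> in auto)
qed (use \<open>0 \<le> B\<close> in auto)

lemma front_speed_ge_KPP_speed:
  fixes h q :: "real \<Rightarrow> real"
  assumes h_cont: "continuous_on {0..1} h" and q: "cond_q q" and front: "has_front_solution h q c"
  shows "h 0 + 2 * sqrt (real_of_ereal (Liminf (at_right 0) (\<lambda>\<phi>. ereal (q \<phi> / \<phi>)))) \<le> c"
proof -
  have "\<forall>\<^sub>F \<phi> in at_right 0. 0 \<le> q \<phi> / \<phi>"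
    using q unfolding eventually_at_right_field cond_q_def
    by (intro exI[of _ 1]) (auto intro: less_imp_le)
  then have "h 0 \<le> c" using front_speed_ge_KPP_bound[OF h_cont front order_refl] by simp
  have "b \<le> ((c - h 0) / 2)\<^sup>2"
    if "0 < b" and "\<forall>\<^sub>F \<phi> in at_right 0. ereal b < ereal (q \<phi> / \<phi>)" for b
  proof -
    have "\<forall>\<^sub>F \<phi> in at_right 0. b \<le> q \<phi> / \<phi>" using that(2) by (auto elim: eventually_mono)
    then have "h 0 + 2 * sqrt b \<le> c"
      using front_speed_ge_KPP_bound[OF h_cont front] that(1) by simp
    then have "sqrt b \<le> (c - h 0) / 2" by simp
    from power_mono[OF this, of 2] show ?thesis using that(1) by simp
  qed
  then have "real_of_ereal (Liminf (at_right 0) (\<lambda>\<phi>. ereal (q \<phi> / \<phi>))) \<le> ((c - h 0) / 2)\<^sup>2"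
    by (intro real_of_ereal_Liminf_le) auto
  then have "sqrt (real_of_ereal (Liminf (at_right 0) (\<lambda>\<phi>. ereal (q \<phi> / \<phi>)))) \<le> (c - h 0) / 2"
    using \<open>h 0 \<le> c\<close> real_sqrt_le_mono by fastforce
  then show ?thesis by simp
qed

theorem corollary5p4:
  fixes f h q :: "real \<Rightarrow> real" and cstar :: real
  assumes f_deriv: "\<forall>x\<in>{0..1}. (f has_real_derivative h x) (at x within {0..1})"
    and h_cont: "continuous_on {0..1} h"
    and f0: "f 0 = 0"
    and q: "cond_q q"
    and cstar: "\<forall>c. has_front_solution h q c \<longleftrightarrow> c \<ge> cstar"
  shows "cstar \<ge> max (SUP \<phi>\<in>{0<..1}. f \<phi> / \<phi>)
                  (h 0 + 2 * sqrt (real_of_ereal (Liminf (at_right 0) (\<lambda>\<phi>. ereal (q \<phi> / \<phi>)))))"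
proof -
  have front: "has_front_solution h q cstar" using cstar by simp
  have "(SUP \<phi>\<in>{0<..1}. f \<phi> / \<phi>) \<le> cstar"
    using front_speed_ge_secant_slope[OF f_deriv f0 q front] by (intro cSUP_least) auto
  moreover have "h 0 + 2 * sqrt (real_of_ereal (Liminf (at_right 0) (\<lambda>\<phi>. ereal (q \<phi> / \<phi>)))) \<le> cstar"
    using front_speed_ge_KPP_speed[OF h_cont q front] .
  ultimately show ?thesis by simp
qed

end
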